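(* Let $[0,1,\dots,k]$ be a hierarchical-leadership flock, and let $x_i,v_i:[0,\infty)\to\mathbb{R}^3$ ($0\le i\le k$) satisfy \[\dot x_i=v_i,\qquad \dot v_i=\sum_{j\in\mathcal{L}(i)}a_{ij}(x)(v_j-v_i),\qquad i=1,\dots,k,\] \[\dot x_0=v_0,\qquad \dot v_0=f(t),\qquad t>0,\] with $a_{ij}(x)=H/(1+|x_i-x_j|^2)^{\beta}$ for $j\in\mathcal{L}(i)$, where $H>0$ and $0<\beta<1/2$, and where the leader's free-will acceleration satisfies $|f(t)|=O((1+t)^{-\mu})$ for some exponent $\mu>k$. Then \[\max_{0\le i,j\le k}|v_i(t)-v_j(t)|=O\big((1+t)^{-(\mu-k)}\big).\]
   Context: A flock $[0,1,\dots,k]$ is under hierarchical leadership if $j\in\mathcal{L}(i)$ (agent $i$ is led by agent $j$) only if $j<i$, and every agent $i>0$ has a nonempty leader set $\mathcal{L}(i)$; agent $0$ is the overall leader with no leaders. *)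

theory Defs
  imports "HOL-Analysis.Analysis" "HOL-Library.Landau_Symbols"
begin

definition hierarchical_leadership :: "nat \<Rightarrow> (nat \<Rightarrow> nat set) \<Rightarrow> bool" where
  "hierarchical_leadership k L \<longleftrightarrow>
     L 0 = {} \<and>
     (\<forall>i\<in>{1..k}. L i \<noteq> {} \<and> (\<forall>j\<in>L i. j < i))"

end

(* Each follower's velocity obeys a relaxation equation u' = p - sigma u towards its leaders, and
   such u are controlled by a first-crossing (barrier) argument for norm u.  The leader's velocity is
   bounded because its acceleration is integrable (mu > 1); inductively along the hierarchy all
   velocities are bounded, so distances grow at most linearly and the damping sigma_i = sum_j a_ij
   is at least c (1 + t)^(-2 beta) with 2 beta < 1.  If the leaders of agent i deviate from agent 0
   by O((1 + t)^-(mu - i + 1)), the barrier M (1 + t)^-(mu - i) for |v_i - v_0| cannot be crossed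
   once c (1 + t)^(1 - 2 beta) exceeds mu - i + 1: the damping then beats both the forcing and the
   decay of the barrier.  So each level of the hierarchy costs one power of decay. *)

theory Submission
  imports Defs "HOL-Real_Asymp.Real_Asymp"
begin

lemma stays_negative_if_deriv_neg_at_zeros:
  fixes d :: "real \<Rightarrow> real"
  assumes cont: "continuous_on {T..} d" and start: "d T < 0"
    and deriv: "\<And>t. t > T \<Longrightarrow> d t = 0 \<Longrightarrow> \<exists>D. (d has_real_derivative D) (at t) \<and> D < 0"
    and "t \<ge> T"
  shows "d t < 0"
proof (rule ccontr)
  assume "\<not> d t < 0"
  define S where "S = {s \<in> {T..t}. d s \<ge> 0}"
  have "continuous_on {T..t} d" using cont by (rule continuous_on_subset) auto
  then have "closed S"
    unfolding S_def using continuous_closed_preimage[of "{T..t}" d "{0..}"]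
    by (simp add: vimage_def Int_def)
  moreover have "bounded S" by (rule bounded_subset[of "{T..t}"]) (auto simp: S_def)
  ultimately have "compact S" by (simp add: compact_eq_bounded_closed)
  moreover have "S \<noteq> {}" using \<open>\<not> d t < 0\<close> \<open>t \<ge> T\<close> by (auto simp: S_def)
  ultimately obtain t1 where "t1 \<in> S" and first: "\<And>s. s \<in> S \<Longrightarrow> t1 \<le> s"
    by (meson compact_attains_inf)
  from \<open>t1 \<in> S\<close> have "T \<le> t1" "t1 \<le> t" and "d t1 \<ge> 0" by (auto simp: S_def)
  moreover have "t1 \<noteq> T" using start \<open>d t1 \<ge> 0\<close> by auto
  ultimately have "T < t1" by simp
  have before: "d s < 0" if "T \<le> s" "s < t1" for s
    using first[of s] that \<open>t1 \<le> t\<close> by (fastforce simp: S_def)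
  have "d t1 = 0"
  proof (rule ccontr)
    assume "d t1 \<noteq> 0"
    have "continuous_on {T..t1} d" using cont by (rule continuous_on_subset) auto
    then obtain s where "T \<le> s" "s \<le> t1" "d s = 0"
      using IVT'[of d T 0 t1] \<open>T < t1\<close> \<open>d t1 \<ge> 0\<close> start by auto
    then show False using before \<open>d t1 \<noteq> 0\<close> by (cases "s = t1") force+
  qed
  then obtain D where "(d has_real_derivative D) (at t1)" "D < 0" using deriv \<open>T < t1\<close> by blast
  then obtain e where "e > 0" and decr: "\<And>h. h > 0 \<Longrightarrow> h < e \<Longrightarrow> d t1 < d (t1 - h)"
    using DERIV_neg_dec_left by blast
  define h where "h = min (e / 2) ((t1 - T) / 2)"
  have "0 < h" "h < e" using \<open>e > 0\<close> \<open>T < t1\<close> by (auto simp: h_def)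
  moreover have "h \<le> (t1 - T) / 2" unfolding h_def by (rule min.cobounded2)
  then have "T \<le> t1 - h" using \<open>T < t1\<close> by (simp add: field_simps)
  ultimately show False using decr[of h] before[of "t1 - h"] \<open>d t1 = 0\<close> by auto
qed

lemma norm_stays_below_barrier:
  fixes u :: "real \<Rightarrow> 'a::real_inner" and \<Phi> :: "real \<Rightarrow> real"
  assumes du: "\<And>s. s \<ge> T \<Longrightarrow> (u has_vector_derivative u' s) (at s)"
    and d\<Phi>: "\<And>s. s \<ge> T \<Longrightarrow> (\<Phi> has_real_derivative \<Phi>' s) (at s)"
    and pos: "\<And>s. s \<ge> T \<Longrightarrow> \<Phi> s > 0"
    and start: "norm (u T) < \<Phi> T"
    and crossing: "\<And>s. s > T \<Longrightarrow> norm (u s) = \<Phi> s \<Longrightarrow> inner (u s) (u' s) < \<Phi> s * \<Phi>' s"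
    and "t \<ge> T"
  shows "norm (u t) < \<Phi> t"
proof -
  define d where "d s = inner (u s) (u s) - (\<Phi> s)\<^sup>2" for s
  have d_eq: "d s = (norm (u s))\<^sup>2 - (\<Phi> s)\<^sup>2" for s
    by (simp add: d_def power2_norm_eq_inner)
  have deriv: "(d has_real_derivative 2 * inner (u s) (u' s) - 2 * \<Phi> s * \<Phi>' s) (at s)"
    if "s \<ge> T" for s
    using du[OF that] d\<Phi>[OF that]
    unfolding d_def has_vector_derivative_def has_field_derivative_def
    by (auto intro!: derivative_eq_intros simp: inner_commute algebra_simps power2_eq_square)
  have "continuous_on {T..} d"
    using deriv by (auto intro!: continuous_at_imp_continuous_on DERIV_isCont)
  moreover have "d T < 0"
    using start norm_ge_zero[of "u T"] by (simp add: d_eq power_strict_mono)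
  moreover have "\<exists>D. (d has_real_derivative D) (at s) \<and> D < 0" if "s > T" "d s = 0" for s
  proof -
    have "norm (u s) = \<Phi> s"
      using that pos[of s] by (simp add: d_eq power2_eq_iff_nonneg)
    then show ?thesis using deriv[of s] crossing[of s] that(1) by fastforce
  qed
  ultimately have "d t < 0" using \<open>t \<ge> T\<close> by (rule stays_negative_if_deriv_neg_at_zeros)
  then show ?thesis using pos[OF \<open>t \<ge> T\<close>] by (simp add: d_eq power2_less_imp_less)
qed

lemma powr_bigo_powr_mono:
  "a \<le> b \<Longrightarrow> (\<lambda>t::real. (1 + t) powr a) \<in> O[at_top](\<lambda>t. (1 + t) powr b)"
  by (intro bigoI[of _ 1] eventually_mono[OF eventually_ge_at_top[of 0]]) (simp add: powr_mono)

lemma bounded_if_deriv_bigo_powr: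
  fixes u :: "real \<Rightarrow> 'a::real_normed_vector"
  assumes du: "\<forall>\<^sub>F t in at_top. (u has_vector_derivative u' t) (at t)"
    and decay: "(\<lambda>t. norm (u' t)) \<in> O[at_top](\<lambda>t. (1 + t) powr (-\<mu>))" and "\<mu> > 1"
  shows "(\<lambda>t. norm (u t)) \<in> O[at_top](\<lambda>_. 1)"
proof -
  obtain F where "F > 0" and bound: "\<forall>\<^sub>F t in at_top. norm (u' t) \<le> F * (1 + t) powr (-\<mu>)"
    using decay by (elim landau_o.bigE) auto
  from du bound eventually_ge_at_top[of 0] have "\<forall>\<^sub>F t in at_top. t \<ge> 0
      \<and> (u has_vector_derivative u' t) (at t) \<and> norm (u' t) \<le> F * (1 + t) powr (-\<mu>)"
    by eventually_elim blast
  then obtain T where T: "\<And>t. t \<ge> T \<Longrightarrow> t \<ge> 0 \<and> (u has_vector_derivative u' t) (at t)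
      \<and> norm (u' t) \<le> F * (1 + t) powr (-\<mu>)"
    by (auto simp: eventually_at_top_linorder)
  define \<phi> where "\<phi> s = F / (1 - \<mu>) * (1 + s) powr (1 - \<mu>)" for s
  have d\<phi>: "(\<phi> has_vector_derivative F * (1 + s) powr (-\<mu>)) (at s)" if "s \<ge> T" for s
  proof -
    have "1 + s > 0" using T[OF that] by simp
    then have "(\<phi> has_real_derivative F / (1 - \<mu>) * ((1 - \<mu>) * (1 + s) powr (1 - \<mu> - 1))) (at s)"
      unfolding \<phi>_def by (auto intro!: derivative_eq_intros)
    then show ?thesis
      using \<open>\<mu> > 1\<close> by (simp add: has_real_derivative_iff_has_vector_derivative)
  qed
  have "norm (u t) \<le> norm (u T) + F / (\<mu> - 1)" if "t > T" for t
  proof -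
    have "norm (u t - u T) \<le> \<phi> t - \<phi> T"
    proof (rule differentiable_bound_general[OF \<open>T < t\<close>,
          where f' = u' and \<phi>' = "\<lambda>s. F * (1 + s) powr (-\<mu>)"])
      show "continuous_on {T..t} u"
        using T by (intro continuous_on_vector_derivative) (auto intro: has_vector_derivative_at_within)
      show "continuous_on {T..t} \<phi>"
        using d\<phi> by (intro continuous_on_vector_derivative) (auto intro: has_vector_derivative_at_within)
    qed (use T d\<phi> in auto)
    moreover have "\<phi> t \<le> 0"
      unfolding \<phi>_def using \<open>F > 0\<close> \<open>\<mu> > 1\<close>
      by (intro mult_nonpos_nonneg divide_nonneg_neg) auto
    moreover have "(1 + T) powr (1 - \<mu>) \<le> 1"
      using T[of T] \<open>\<mu> > 1\<close> powr_mono[of "1 - \<mu>" 0 "1 + T"] by simp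
    then have "F / (\<mu> - 1) * (1 + T) powr (1 - \<mu>) \<le> F / (\<mu> - 1)"
      using \<open>F > 0\<close> \<open>\<mu> > 1\<close> by (intro mult_left_le) auto
    moreover have "F / (1 - \<mu>) = - (F / (\<mu> - 1))"
      by (metis divide_minus_right minus_diff_eq)
    ultimately show ?thesis using norm_triangle_ineq2[of "u t" "u T"] by (simp add: \<phi>_def)
  qed
  then have "\<forall>\<^sub>F t in at_top. norm (norm (u t)) \<le> (norm (u T) + F / (\<mu> - 1)) * norm (1::real)"
    by (auto simp: eventually_at_top_dense)
  then show ?thesis by (rule bigoI)
qed

lemma bounded_if_relaxation:
  fixes u p :: "real \<Rightarrow> 'a::real_inner" and \<sigma> :: "real \<Rightarrow> real"
  assumes du: "\<forall>\<^sub>F t in at_top. (u has_vector_derivative p t - \<sigma> t *\<^sub>R u t) (at t)"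
    and \<sigma>_pos: "\<forall>\<^sub>F t in at_top. \<sigma> t > 0"
    and p_bound: "\<forall>\<^sub>F t in at_top. norm (p t) \<le> B * \<sigma> t"
  shows "(\<lambda>t. norm (u t)) \<in> O[at_top](\<lambda>_. 1)"
proof -
  from du \<sigma>_pos p_bound have "\<forall>\<^sub>F t in at_top. (u has_vector_derivative p t - \<sigma> t *\<^sub>R u t) (at t)
      \<and> \<sigma> t > 0 \<and> norm (p t) \<le> B * \<sigma> t"
    by eventually_elim blast
  then obtain T where T: "\<And>t. t \<ge> T \<Longrightarrow> (u has_vector_derivative p t - \<sigma> t *\<^sub>R u t) (at t)
      \<and> \<sigma> t > 0 \<and> norm (p t) \<le> B * \<sigma> t"
    by (auto simp: eventually_at_top_linorder)
  define M where "M = max B (norm (u T)) + 1"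
  have "M > B" "M > norm (u T)" by (simp_all add: M_def)
  then have "M > 0" using norm_ge_zero[of "u T"] by linarith
  have "norm (u t) < M" if "t \<ge> T" for t
  proof (rule norm_stays_below_barrier[where \<Phi> = "\<lambda>_. M" and \<Phi>' = "\<lambda>_. 0", OF _ _ _ _ _ that])
    show "(u has_vector_derivative p s - \<sigma> s *\<^sub>R u s) (at s)" if "s \<ge> T" for s
      using T that by blast
    show "M > 0" by fact
    fix s assume s: "s > T" "norm (u s) = M"
    have "inner (u s) (u s) = M\<^sup>2" using s(2) by (simp flip: power2_norm_eq_inner)
    then have "inner (u s) (p s - \<sigma> s *\<^sub>R u s) = inner (u s) (p s) - \<sigma> s * M\<^sup>2"
      by (simp add: inner_diff_right)
    also have "\<dots> \<le> M * (B * \<sigma> s) - \<sigma> s * M\<^sup>2"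
      using norm_cauchy_schwarz[of "u s" "p s"] T[of s] s \<open>M > norm (u T)\<close>
      by (smt (verit) mult_left_mono norm_ge_zero)
    also have "\<dots> = \<sigma> s * M * (B - M)" by (simp add: algebra_simps power2_eq_square)
    also have "\<dots> < 0"
      using T[of s] s \<open>M > B\<close> \<open>M > 0\<close> by (intro mult_pos_neg mult_pos_pos) auto
    finally show "inner (u s) (p s - \<sigma> s *\<^sub>R u s) < M * 0" by simp
  qed (use \<open>M > norm (u T)\<close> in simp_all)
  then have "\<forall>\<^sub>F t in at_top. norm (norm (u t)) \<le> M * norm (1::real)"
    by (auto simp: eventually_at_top_linorder intro: less_imp_le)
  then show ?thesis by (rule bigoI)
qed

lemma norm_bigo_linear_if_deriv_bounded:
  fixes y w :: "real \<Rightarrow> 'a::real_normed_vector"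
  assumes dy: "\<forall>\<^sub>F t in at_top. (y has_vector_derivative w t) (at t)"
    and w_bound: "(\<lambda>t. norm (w t)) \<in> O[at_top](\<lambda>_. 1)"
  shows "(\<lambda>t. norm (y t)) \<in> O[at_top](\<lambda>t. t)"
proof -
  obtain B where "B > 0" and bound: "\<forall>\<^sub>F t in at_top. norm (w t) \<le> B"
    using w_bound by (elim landau_o.bigE) auto
  from dy bound eventually_ge_at_top[of 1] have "\<forall>\<^sub>F t in at_top. t \<ge> 1
      \<and> (y has_vector_derivative w t) (at t) \<and> norm (w t) \<le> B"
    by eventually_elim blast
  then obtain T where T: "\<And>t. t \<ge> T \<Longrightarrow> t \<ge> 1
      \<and> (y has_vector_derivative w t) (at t) \<and> norm (w t) \<le> B"
    by (auto simp: eventually_at_top_linorder)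
  have "norm (y t) \<le> (norm (y T) + B) * t" if "t > T" for t
  proof -
    have "norm (y t - y T) \<le> B * t - B * T"
    proof (rule differentiable_bound_general[OF \<open>T < t\<close>, where f' = w and \<phi>' = "\<lambda>_. B"])
      show "continuous_on {T..t} y"
        using T by (intro continuous_on_vector_derivative) (auto intro: has_vector_derivative_at_within)
      show "((*) B has_vector_derivative B) (at s)" for s
        by (auto intro!: derivative_eq_intros simp flip: has_real_derivative_iff_has_vector_derivative)
    qed (use T in \<open>auto intro: continuous_intros\<close>)
    moreover have "norm (y T) \<le> norm (y T) * t"
      using T[of T] \<open>T < t\<close> by (simp add: mult_le_cancel_left1)
    moreover have "0 \<le> B * T" using T[of T] \<open>B > 0\<close> by simp
    ultimately show ?thesis using norm_triangle_ineq2[of "y t" "y T"] by (simp add: algebra_simps)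
  qed
  then have "\<forall>\<^sub>F t in at_top. norm (norm (y t)) \<le> (norm (y T) + B) * norm t"
    using T[of T] by (auto simp: eventually_at_top_dense intro!: exI[of _ T])
  then show ?thesis by (rule bigoI)
qed

lemma powr_weight_lower_bound:
  fixes y :: "real \<Rightarrow> 'a::real_normed_vector"
  assumes growth: "(\<lambda>t. norm (y t)) \<in> O[at_top](\<lambda>t. t)" and "H > 0" "\<beta> \<ge> 0"
  shows "\<exists>c>0. \<forall>\<^sub>F t in at_top. c * (1 + t) powr (-(2 * \<beta>)) \<le> H / (1 + (norm (y t))\<^sup>2) powr \<beta>"
proof -
  obtain K where "K > 0" and "\<forall>\<^sub>F t in at_top. norm (y t) \<le> K * norm t"
    using growth by (elim landau_o.bigE) auto
  from this(2) eventually_ge_at_top[of 0] have K: "\<forall>\<^sub>F t in at_top. t \<ge> 0 \<and> norm (y t) \<le> K * t"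
    by eventually_elim auto
  define c where "c = H / (1 + K\<^sup>2) powr \<beta>"
  have "1 + K\<^sup>2 > 0" by (simp add: add_pos_nonneg)
  have bound: "c * (1 + t) powr (-(2 * \<beta>)) \<le> H / (1 + (norm (y t))\<^sup>2) powr \<beta>"
    if "t \<ge> 0" "norm (y t) \<le> K * t" for t
  proof -
    have "norm (y t) \<le> K * (1 + t)"
      using that \<open>K > 0\<close> by (smt (verit) mult_left_mono)
    then have "(norm (y t))\<^sup>2 \<le> K\<^sup>2 * (1 + t)\<^sup>2"
      by (metis norm_ge_zero power_mono power_mult_distrib)
    moreover have "1 \<le> (1 + t)\<^sup>2" using that by (simp add: one_le_power)
    ultimately have "1 + (norm (y t))\<^sup>2 \<le> (1 + K\<^sup>2) * (1 + t)\<^sup>2"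
      by (simp add: algebra_simps)
    then have "(1 + (norm (y t))\<^sup>2) powr \<beta> \<le> ((1 + K\<^sup>2) * (1 + t)\<^sup>2) powr \<beta>"
      using \<open>\<beta> \<ge> 0\<close> by (intro powr_mono2) auto
    also have "\<dots> = (1 + K\<^sup>2) powr \<beta> * ((1 + t) powr 2) powr \<beta>"
      using that by (simp add: powr_mult powr_numeral add_pos_nonneg)
    also have "\<dots> = (1 + K\<^sup>2) powr \<beta> * (1 + t) powr (2 * \<beta>)"
      by (simp add: powr_powr)
    finally have "(1 + (norm (y t))\<^sup>2) powr \<beta> \<le> (1 + K\<^sup>2) powr \<beta> * (1 + t) powr (2 * \<beta>)" .
    then have "H / ((1 + K\<^sup>2) powr \<beta> * (1 + t) powr (2 * \<beta>)) \<le> H / (1 + (norm (y t))\<^sup>2) powr \<beta>"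
      using \<open>H > 0\<close> \<open>1 + K\<^sup>2 > 0\<close> add_pos_nonneg[of 1 "(norm (y t))\<^sup>2"] that
      by (intro divide_left_mono mult_pos_pos) auto
    then show ?thesis by (simp add: c_def powr_minus divide_inverse)
  qed
  have "c > 0" using \<open>1 + K\<^sup>2 > 0\<close> \<open>H > 0\<close> by (simp add: c_def)
  moreover from K have "\<forall>\<^sub>F t in at_top. c * (1 + t) powr (-(2 * \<beta>)) \<le> H / (1 + (norm (y t))\<^sup>2) powr \<beta>"
    by eventually_elim (use bound in blast)
  ultimately show ?thesis by blast
qed

(* The crossing condition of norm_stays_below_barrier for the barrier M y^-q, where y = 1 + t. *)
lemma inner_damped_lt_barrier_deriv:
  fixes u p :: "'a::real_inner"
  assumes "y > 0" "M > 0" "G < M"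
    and on_barrier: "norm u = M * y powr (-q)"
    and forcing: "norm p \<le> G * y powr (-q - 1)"
    and damping: "c * y powr (-\<gamma>) \<le> \<sigma>" and large: "q + 1 \<le> c * y powr (1 - \<gamma>)"
  shows "inner u (p - \<sigma> *\<^sub>R u) < M * y powr (-q) * (M * (-q * y powr (-q - 1)))"
proof -
  define r where "r = norm u"
  have "r > 0" using on_barrier \<open>M > 0\<close> \<open>y > 0\<close> by (simp add: r_def)
  have powr_eqs: "y powr (-q - 1) = r / (M * y)" "y powr (-\<gamma>) = y powr (1 - \<gamma>) / y"
    using on_barrier \<open>y > 0\<close> \<open>M > 0\<close> by (simp_all add: r_def powr_diff powr_minus_divide)
  have "inner u (p - \<sigma> *\<^sub>R u) = inner u p - \<sigma> * r\<^sup>2"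
    by (simp add: r_def inner_diff_right power2_norm_eq_inner)
  also have "\<dots> \<le> r * (G * y powr (-q - 1)) - c * y powr (-\<gamma>) * r\<^sup>2"
  proof -
    have "inner u p \<le> r * (G * y powr (-q - 1))"
      using norm_cauchy_schwarz[of u p] forcing \<open>r > 0\<close>
      by (smt (verit, best) mult_left_mono r_def)
    moreover have "c * y powr (-\<gamma>) * r\<^sup>2 \<le> \<sigma> * r\<^sup>2"
      using damping by (rule mult_right_mono) simp
    ultimately show ?thesis by linarith
  qed
  also have "\<dots> = r\<^sup>2 / y * (G / M - c * y powr (1 - \<gamma>))"
    using \<open>y > 0\<close> \<open>M > 0\<close> by (simp add: powr_eqs field_simps power2_eq_square)
  also have "\<dots> < r\<^sup>2 / y * (- q)"
  proof (rule mult_strict_left_mono)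
    have "G / M < 1" using \<open>G < M\<close> \<open>M > 0\<close> by simp
    with large show "G / M - c * y powr (1 - \<gamma>) < - q" by simp
  qed (use \<open>r > 0\<close> \<open>y > 0\<close> in simp)
  also have "\<dots> = M * y powr (-q) * (M * (-q * y powr (-q - 1)))"
    using \<open>y > 0\<close> by (simp add: r_def on_barrier powr_diff field_simps power2_eq_square)
  finally show ?thesis .
qed

lemma norm_bigo_powr_if_damped:
  fixes u p :: "real \<Rightarrow> 'a::real_inner" and \<sigma> :: "real \<Rightarrow> real"
  assumes du: "\<forall>\<^sub>F t in at_top. (u has_vector_derivative p t - \<sigma> t *\<^sub>R u t) (at t)"
    and damping: "\<forall>\<^sub>F t in at_top. c * (1 + t) powr (-\<gamma>) \<le> \<sigma> t" and "c > 0" "\<gamma> < 1"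
    and forcing: "(\<lambda>t. norm (p t)) \<in> O[at_top](\<lambda>t. (1 + t) powr (-q - 1))"
  shows "(\<lambda>t. norm (u t)) \<in> O[at_top](\<lambda>t. (1 + t) powr (-q))"
proof -
  obtain G where "G > 0" and G: "\<forall>\<^sub>F t in at_top. norm (p t) \<le> G * (1 + t) powr (-q - 1)"
    using forcing by (elim landau_o.bigE) auto
  have "filterlim (\<lambda>t. c * (1 + t) powr (1 - \<gamma>)) at_top at_top"
    using \<open>c > 0\<close> \<open>\<gamma> < 1\<close> by real_asymp
  then have large: "\<forall>\<^sub>F t in at_top. q + 1 \<le> c * (1 + t) powr (1 - \<gamma>)"
    by (simp add: filterlim_at_top)
  from du damping G large eventually_ge_at_top[of 0]
  have "\<forall>\<^sub>F t in at_top. (u has_vector_derivative p t - \<sigma> t *\<^sub>R u t) (at t)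
      \<and> c * (1 + t) powr (-\<gamma>) \<le> \<sigma> t \<and> norm (p t) \<le> G * (1 + t) powr (-q - 1)
      \<and> q + 1 \<le> c * (1 + t) powr (1 - \<gamma>) \<and> t \<ge> 0"
    by eventually_elim blast
  then obtain T where T: "\<And>t. t \<ge> T \<Longrightarrow> (u has_vector_derivative p t - \<sigma> t *\<^sub>R u t) (at t)
      \<and> c * (1 + t) powr (-\<gamma>) \<le> \<sigma> t \<and> norm (p t) \<le> G * (1 + t) powr (-q - 1)
      \<and> q + 1 \<le> c * (1 + t) powr (1 - \<gamma>) \<and> t \<ge> 0"
    by (auto simp: eventually_at_top_linorder)
  define M where "M = max G (norm (u T) * (1 + T) powr q) + 1"
  have "M > G" "M > 0" using \<open>G > 0\<close> by (auto simp: M_def)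
  have below: "norm (u t) < M * (1 + t) powr (-q)" if "t \<ge> T" for t
  proof (rule norm_stays_below_barrier[OF _ _ _ _ _ that])
    show "(u has_vector_derivative p s - \<sigma> s *\<^sub>R u s) (at s)" if "s \<ge> T" for s
      using T that by blast
    show "((\<lambda>t. M * (1 + t) powr (-q)) has_real_derivative M * (-q * (1 + s) powr (-q - 1))) (at s)"
      if "s \<ge> T" for s
      using T[OF that] by (auto intro!: derivative_eq_intros)
    show "M * (1 + s) powr (-q) > 0" if "s \<ge> T" for s
      using T[OF that] \<open>M > 0\<close> by simp
    have "norm (u T) = norm (u T) * (1 + T) powr q * (1 + T) powr (-q)"
      using T[of T] by (simp add: powr_minus)
    also have "\<dots> < M * (1 + T) powr (-q)"
      using T[of T] by (intro mult_strict_right_mono) (auto simp: M_def)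
    finally show "norm (u T) < M * (1 + T) powr (-q)" .
    show "inner (u s) (p s - \<sigma> s *\<^sub>R u s) < M * (1 + s) powr (-q) * (M * (-q * (1 + s) powr (-q - 1)))"
      if "s > T" "norm (u s) = M * (1 + s) powr (-q)" for s
      using T[of s] that \<open>M > 0\<close> \<open>M > G\<close>
      by (intro inner_damped_lt_barrier_deriv[where y = "1 + s" and G = G and c = c and \<gamma> = \<gamma>]) auto
  qed
  have "\<forall>\<^sub>F t in at_top. norm (norm (u t)) \<le> M * norm ((1 + t) powr (-q))"
    using eventually_ge_at_top[of T] by eventually_elim (use below in \<open>auto intro: less_imp_le\<close>)
  then show ?thesis by (rule bigoI)
qed

lemma Max_Max_norm_diff_bigo:
  fixes w :: "'i \<Rightarrow> 'b \<Rightarrow> 'a::real_normed_vector" and g :: "'b \<Rightarrow> real"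
  assumes "finite A" "A \<noteq> {}" and close: "\<And>i. i \<in> A \<Longrightarrow> (\<lambda>t. norm (w i t - c t)) \<in> O[F](g)"
  shows "(\<lambda>t. MAX i\<in>A. MAX j\<in>A. norm (w i t - w j t)) \<in> O[F](g)"
proof -
  have "(\<lambda>t. MAX i\<in>A. MAX j\<in>A. norm (w i t - w j t)) \<in> O[F](\<lambda>t. 2 * (\<Sum>i\<in>A. norm (w i t - c t)))"
  proof (intro landau_o.big_mono always_eventually allI)
    fix t
    have "norm (w i t - w j t) \<le> 2 * (\<Sum>i\<in>A. norm (w i t - c t))" if "i \<in> A" "j \<in> A" for i j
    proof -
      have "norm (w i t - w j t) \<le> norm (w i t - c t) + norm (w j t - c t)"
        using norm_triangle_ineq4[of "w i t - c t" "w j t - c t"] by simp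
      also have "\<dots> \<le> (\<Sum>i\<in>A. norm (w i t - c t)) + (\<Sum>i\<in>A. norm (w i t - c t))"
        using assms that by (intro add_mono member_le_sum) auto
      finally show ?thesis by simp
    qed
    moreover have "0 \<le> (MAX i\<in>A. MAX j\<in>A. norm (w i t - w j t))"
      using assms by (auto simp: Max_ge_iff)
    ultimately show "norm (MAX i\<in>A. MAX j\<in>A. norm (w i t - w j t))
        \<le> norm (2 * (\<Sum>i\<in>A. norm (w i t - c t)))"
      using assms by (simp add: Max_le_iff sum_nonneg)
  qed
  also have "(\<lambda>t. 2 * (\<Sum>i\<in>A. norm (w i t - c t))) \<in> O[F](g)"
    using close by (subst landau_o.big.cmult_in_iff) (auto intro!: big_sum_in_bigo)
  finally show ?thesis .
qed

locale hierarchical_flock =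
  fixes k :: nat and L :: "nat \<Rightarrow> nat set"
    and x v :: "nat \<Rightarrow> real \<Rightarrow> 'a::real_inner" and f :: "real \<Rightarrow> 'a"
    and H \<beta> :: real
  assumes hier: "hierarchical_leadership k L"
    and H: "H > 0" and \<beta>: "\<beta> \<ge> 0"
    and dx: "\<And>i t. i \<le> k \<Longrightarrow> t > 0 \<Longrightarrow> (x i has_vector_derivative v i t) (at t)"
    and dv: "\<And>i t. 1 \<le> i \<Longrightarrow> i \<le> k \<Longrightarrow> t > 0 \<Longrightarrow>
              (v i has_vector_derivative
                 (\<Sum>j\<in>L i. (H / (1 + (norm (x i t - x j t))\<^sup>2) powr \<beta>) *\<^sub>R (v j t - v i t))) (at t)"
    and dv0: "\<And>t. t > 0 \<Longrightarrow> (v 0 has_vector_derivative f t) (at t)"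
begin

definition weight :: "nat \<Rightarrow> nat \<Rightarrow> real \<Rightarrow> real" where
  "weight i j t = H / (1 + (norm (x i t - x j t))\<^sup>2) powr \<beta>"

definition total_weight :: "nat \<Rightarrow> real \<Rightarrow> real" where
  "total_weight i t = (\<Sum>j\<in>L i. weight i j t)"

lemma leaders:
  assumes "1 \<le> i" "i \<le> k"
  shows "L i \<noteq> {}" and "finite (L i)" and "j \<in> L i \<Longrightarrow> j < i"
proof -
  show "L i \<noteq> {}" and less: "j \<in> L i \<Longrightarrow> j < i" for j
    using hier assms by (auto simp: hierarchical_leadership_def)
  then have "L i \<subseteq> {..<i}" by blast
  then show "finite (L i)" by (rule finite_subset) simp
qed

lemma weight_pos: "weight i j t > 0"
proof -
  have "1 + (norm (x i t - x j t))\<^sup>2 > 0" by (simp add: add_pos_nonneg)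
  then show ?thesis using H by (simp add: weight_def)
qed

lemma weight_le: "weight i j t \<le> H"
proof -
  have "1 \<le> (1 + (norm (x i t - x j t))\<^sup>2) powr \<beta>" using \<beta> by (simp add: ge_one_powr_ge_zero)
  then show ?thesis using H by (simp add: weight_def divide_le_eq)
qed

lemma total_weight_pos: "1 \<le> i \<Longrightarrow> i \<le> k \<Longrightarrow> total_weight i t > 0"
  using leaders weight_pos by (simp add: total_weight_def sum_pos)

lemma weight_le_total_weight: "1 \<le> i \<Longrightarrow> i \<le> k \<Longrightarrow> j \<in> L i \<Longrightarrow> weight i j t \<le> total_weight i t"
  unfolding total_weight_def using leaders(2) weight_pos
  by (intro member_le_sum) (auto intro: less_imp_le)

lemma norm_weighted_sum_le:
  "norm (\<Sum>j\<in>L i. weight i j t *\<^sub>R w j) \<le> (\<Sum>j\<in>L i. weight i j t * norm (w j))"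
  using norm_sum[of "\<lambda>j. weight i j t *\<^sub>R w j" "L i"] weight_pos[of i _ t] by (simp add: less_imp_le)

lemma follower_relaxation:
  assumes "1 \<le> i" "i \<le> k" "t > 0"
  shows "(v i has_vector_derivative
      (\<Sum>j\<in>L i. weight i j t *\<^sub>R v j t) - total_weight i t *\<^sub>R v i t) (at t)"
  using dv[OF assms]
  by (simp add: weight_def total_weight_def scaleR_diff_right sum_subtractf scaleR_sum_left)

lemma relative_relaxation:
  assumes "1 \<le> i" "i \<le> k" "t > 0"
  shows "((\<lambda>t. v i t - v 0 t) has_vector_derivative
      ((\<Sum>j\<in>L i. weight i j t *\<^sub>R (v j t - v 0 t)) - f t) - total_weight i t *\<^sub>R (v i t - v 0 t)) (at t)"
  using has_vector_derivative_diff[OF dv[OF assms] dv0[OF \<open>t > 0\<close>]]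
  by (simp add: weight_def total_weight_def scaleR_diff_right sum_subtractf scaleR_sum_left algebra_simps)

lemma velocity_bounded:
  assumes leader: "(\<lambda>t. norm (v 0 t)) \<in> O[at_top](\<lambda>_. 1)" and "i \<le> k"
  shows "(\<lambda>t. norm (v i t)) \<in> O[at_top](\<lambda>_. 1)"
  using \<open>i \<le> k\<close>
proof (induction i rule: less_induct)
  case (less i)
  show ?case
  proof (cases "i = 0")
    case True
    with leader show ?thesis by simp
  next
    case False
    with less.prems have i: "1 \<le> i" "i \<le> k" by auto
    have "(\<lambda>t. \<Sum>j\<in>L i. norm (v j t)) \<in> O[at_top](\<lambda>_. 1)"
      using less.IH leaders(3)[OF i] i by (intro big_sum_in_bigo) auto
    then obtain B where "\<forall>\<^sub>F t in at_top. norm (\<Sum>j\<in>L i. norm (v j t)) \<le> B * norm (1::real)"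
      by (elim landau_o.bigE)
    then have B: "\<forall>\<^sub>F t in at_top. (\<Sum>j\<in>L i. norm (v j t)) \<le> B"
      by (simp add: sum_nonneg)
    show ?thesis
    proof (rule bounded_if_relaxation)
      show "\<forall>\<^sub>F t in at_top. (v i has_vector_derivative
          (\<Sum>j\<in>L i. weight i j t *\<^sub>R v j t) - total_weight i t *\<^sub>R v i t) (at t)"
        using eventually_gt_at_top[of 0] by eventually_elim (rule follower_relaxation[OF i])
      show "\<forall>\<^sub>F t in at_top. total_weight i t > 0"
        using total_weight_pos[OF i] by simp
      show "\<forall>\<^sub>F t in at_top. norm (\<Sum>j\<in>L i. weight i j t *\<^sub>R v j t) \<le> B * total_weight i t"
        using B
      proof eventually_elim
        case (elim t)
        have "norm (\<Sum>j\<in>L i. weight i j t *\<^sub>R v j t) \<le> (\<Sum>j\<in>L i. total_weight i t * norm (v j t))"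
          using norm_weighted_sum_le weight_le_total_weight[OF i]
          by (rule order_trans[OF _ sum_mono[OF mult_right_mono]]) auto
        also have "\<dots> \<le> total_weight i t * B"
          using elim total_weight_pos[OF i, of t] by (simp add: sum_distrib_left[symmetric])
        finally show ?case by (simp add: mult.commute)
      qed
    qed
  qed
qed

lemma distance_bigo_linear:
  assumes leader: "(\<lambda>t. norm (v 0 t)) \<in> O[at_top](\<lambda>_. 1)" and "i \<le> k" "j \<le> k"
  shows "(\<lambda>t. norm (x i t - x j t)) \<in> O[at_top](\<lambda>t. t)"
proof (rule norm_bigo_linear_if_deriv_bounded)
  show "\<forall>\<^sub>F t in at_top. ((\<lambda>t. x i t - x j t) has_vector_derivative v i t - v j t) (at t)"
    using eventually_gt_at_top[of 0] by eventually_elim (intro has_vector_derivative_diff dx assms)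
  have "(\<lambda>t. norm (v i t - v j t)) \<in> O[at_top](\<lambda>t. norm (v i t) + norm (v j t))"
    by (intro landau_o.big_mono always_eventually allI) (simp add: norm_triangle_ineq4)
  moreover have "(\<lambda>t. norm (v i t) + norm (v j t)) \<in> O[at_top](\<lambda>_. 1)"
    using velocity_bounded[OF leader] assms(2,3) by (intro sum_in_bigo)
  ultimately show "(\<lambda>t. norm (v i t - v j t)) \<in> O[at_top](\<lambda>_. 1)"
    by (rule landau_o.big_trans)
qed

lemma total_weight_lower_bound:
  assumes leader: "(\<lambda>t. norm (v 0 t)) \<in> O[at_top](\<lambda>_. 1)" and i: "1 \<le> i" "i \<le> k"
  shows "\<exists>c>0. \<forall>\<^sub>F t in at_top. c * (1 + t) powr (-(2 * \<beta>)) \<le> total_weight i t"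
proof -
  obtain j where "j \<in> L i" using leaders(1)[OF i] by blast
  with leaders(3)[OF i] i have "j \<le> k" by force
  obtain c where "c > 0" and c: "\<forall>\<^sub>F t in at_top. c * (1 + t) powr (-(2 * \<beta>)) \<le> weight i j t"
    using powr_weight_lower_bound[OF distance_bigo_linear[OF leader \<open>i \<le> k\<close> \<open>j \<le> k\<close>] H \<beta>]
    unfolding weight_def by blast
  from c have "\<forall>\<^sub>F t in at_top. c * (1 + t) powr (-(2 * \<beta>)) \<le> total_weight i t"
    by eventually_elim (use weight_le_total_weight[OF i \<open>j \<in> L i\<close>] in \<open>blast intro: order_trans\<close>)
  with \<open>c > 0\<close> show ?thesis by blast
qed

lemma relative_forcing_bigo:
  fixes g :: "real \<Rightarrow> real"
  assumes "\<And>j. j \<in> L i \<Longrightarrow> (\<lambda>t. norm (v j t - v 0 t)) \<in> O[at_top](g)"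
    and "(\<lambda>t. norm (f t)) \<in> O[at_top](g)"
  shows "(\<lambda>t. norm ((\<Sum>j\<in>L i. weight i j t *\<^sub>R (v j t - v 0 t)) - f t)) \<in> O[at_top](g)"
proof -
  have "(\<lambda>t. norm ((\<Sum>j\<in>L i. weight i j t *\<^sub>R (v j t - v 0 t)) - f t))
      \<in> O[at_top](\<lambda>t. H * (\<Sum>j\<in>L i. norm (v j t - v 0 t)) + norm (f t))"
  proof (intro landau_o.big_mono always_eventually allI)
    fix t
    have "norm ((\<Sum>j\<in>L i. weight i j t *\<^sub>R (v j t - v 0 t)) - f t)
        \<le> (\<Sum>j\<in>L i. weight i j t * norm (v j t - v 0 t)) + norm (f t)"
      using norm_triangle_ineq4[of "\<Sum>j\<in>L i. weight i j t *\<^sub>R (v j t - v 0 t)" "f t"]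
        norm_weighted_sum_le[of i t "\<lambda>j. v j t - v 0 t"] by linarith
    also have "\<dots> \<le> H * (\<Sum>j\<in>L i. norm (v j t - v 0 t)) + norm (f t)"
      using weight_le by (simp add: sum_distrib_left sum_mono mult_right_mono)
    finally show "norm (norm ((\<Sum>j\<in>L i. weight i j t *\<^sub>R (v j t - v 0 t)) - f t))
        \<le> norm (H * (\<Sum>j\<in>L i. norm (v j t - v 0 t)) + norm (f t))"
      by simp
  qed
  also have "(\<lambda>t. H * (\<Sum>j\<in>L i. norm (v j t - v 0 t)) + norm (f t)) \<in> O[at_top](g)"
    using H assms by (intro sum_in_bigo) (auto intro: big_sum_in_bigo)
  finally show ?thesis .
qed

lemma relative_velocity_decay:
  assumes leader: "(\<lambda>t. norm (v 0 t)) \<in> O[at_top](\<lambda>_. 1)" and "\<beta> < 1 / 2"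
    and f_decay: "(\<lambda>t. norm (f t)) \<in> O[at_top](\<lambda>t. (1 + t) powr (-\<mu>))" and "i \<le> k"
  shows "(\<lambda>t. norm (v i t - v 0 t)) \<in> O[at_top](\<lambda>t. (1 + t) powr (-(\<mu> - real i)))"
  using \<open>i \<le> k\<close>
proof (induction i rule: less_induct)
  case (less i)
  show ?case
  proof (cases "i = 0")
    case True
    then show ?thesis by simp
  next
    case False
    with less.prems have i: "1 \<le> i" "i \<le> k" by auto
    let ?rate = "\<lambda>t. (1 + t) powr (-(\<mu> - real i) - 1)"
    have "(\<lambda>t. norm (v j t - v 0 t)) \<in> O[at_top](?rate)" if "j \<in> L i" for j
    proof -
      have "j < i" "j \<le> k" using leaders(3)[OF i that] i by auto
      then have "-(\<mu> - real j) \<le> -(\<mu> - real i) - 1" by linarith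
      with less.IH[OF \<open>j < i\<close> \<open>j \<le> k\<close>] show ?thesis
        using landau_o.big_trans powr_bigo_powr_mono by blast
    qed
    moreover have "-\<mu> \<le> -(\<mu> - real i) - 1" using i by simp
    with f_decay have "(\<lambda>t. norm (f t)) \<in> O[at_top](?rate)"
      using landau_o.big_trans powr_bigo_powr_mono by blast
    ultimately have forcing: "(\<lambda>t. norm ((\<Sum>j\<in>L i. weight i j t *\<^sub>R (v j t - v 0 t)) - f t))
        \<in> O[at_top](?rate)"
      by (rule relative_forcing_bigo)
    obtain c where "c > 0" and damping:
        "\<forall>\<^sub>F t in at_top. c * (1 + t) powr (-(2 * \<beta>)) \<le> total_weight i t"
      using total_weight_lower_bound[OF leader i] by blast
    show ?thesis
    proof (rule norm_bigo_powr_if_damped[OF _ damping \<open>c > 0\<close> _ forcing])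
      show "\<forall>\<^sub>F t in at_top. ((\<lambda>t. v i t - v 0 t) has_vector_derivative
          ((\<Sum>j\<in>L i. weight i j t *\<^sub>R (v j t - v 0 t)) - f t) - total_weight i t *\<^sub>R (v i t - v 0 t)) (at t)"
        using eventually_gt_at_top[of 0] by eventually_elim (rule relative_relaxation[OF i])
      show "2 * \<beta> < 1" using \<open>\<beta> < 1 / 2\<close> by simp
    qed
  qed
qed

end


theorem theorem6:
  fixes k :: nat and L :: "nat \<Rightarrow> nat set"
    and x v :: "nat \<Rightarrow> real \<Rightarrow> real^3" and f :: "real \<Rightarrow> real^3"
    and H \<beta> \<mu> :: real
  assumes hier: "hierarchical_leadership k L"
    and H: "H > 0" and beta: "0 < \<beta>" "\<beta> < 1/2"
    and cont_x: "\<And>i. i \<le> k \<Longrightarrow> continuous_on {0..} (x i)"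
    and cont_v: "\<And>i. i \<le> k \<Longrightarrow> continuous_on {0..} (v i)"
    and dx: "\<And>i t. i \<le> k \<Longrightarrow> t > 0 \<Longrightarrow> (x i has_vector_derivative v i t) (at t)"
    and dv: "\<And>i t. 1 \<le> i \<Longrightarrow> i \<le> k \<Longrightarrow> t > 0 \<Longrightarrow>
              (v i has_vector_derivative
                 (\<Sum>j\<in>L i. (H / (1 + (norm (x i t - x j t))\<^sup>2) powr \<beta>) *\<^sub>R (v j t - v i t))) (at t)"
    and dv0: "\<And>t. t > 0 \<Longrightarrow> (v 0 has_vector_derivative f t) (at t)"
    and mu: "\<mu> > real k"
    and f_decay: "(\<lambda>t. norm (f t)) \<in> O[at_top](\<lambda>t. (1 + t) powr (-\<mu>))"
  shows "(\<lambda>t. MAX i\<in>{0..k}. MAX j\<in>{0..k}. norm (v i t - v j t))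
           \<in> O[at_top](\<lambda>t. (1 + t) powr (-(\<mu> - real k)))"
proof (cases "k = 0")
  case True
  then show ?thesis by simp
next
  case False
  interpret hierarchical_flock k L x v f H \<beta>
    using hier H beta(1) dx dv dv0 by unfold_locales auto
  have leader_deriv: "\<forall>\<^sub>F t in at_top. (v 0 has_vector_derivative f t) (at t)"
    using eventually_gt_at_top[of 0] by eventually_elim (rule dv0)
  have "\<mu> > 1" using False mu by linarith
  with leader_deriv f_decay have leader: "(\<lambda>t. norm (v 0 t)) \<in> O[at_top](\<lambda>_. 1)"
    by (rule bounded_if_deriv_bigo_powr)
  show ?thesis
  proof (rule Max_Max_norm_diff_bigo)
    fix i assume "i \<in> {0..k}"
    then show "(\<lambda>t. norm (v i t - v 0 t)) \<in> O[at_top](\<lambda>t. (1 + t) powr (-(\<mu> - real k)))"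
      using relative_velocity_decay[OF leader beta(2) f_decay]
        landau_o.big_trans powr_bigo_powr_mono[of "-(\<mu> - real i)" "-(\<mu> - real k)"] by force
  qed simp_all
qed

end
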